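(* Let $q\ge1$ with $q=o(d/\log d)$. Let $U_1,\dots,U_{d-1}$ be iid uniform on $[0,1]$, let $F$ be the CDF of $\sum_{i=1}^{d-1}U_i^q$, let $\tau=\tau^q_{1/2}$, and set $\psi(\ell)=F(\tau^q)-F(\tau^q-\ell^q)$ for $\ell\in[0,1]$. Then $$\int_0^1\psi(\ell)\,d\ell=O\Big(\frac{1}{\sqrt{dq}}\Big)\qquad\text{and}\qquad\int_0^1\psi(\ell)^2\,d\ell=O\Big(\frac1d\Big).$$
   Context: $\tau^q_{1/2}$ is the radius such that $\mathbf{P}[\|\mathbf{x}-\mathbf{y}\|_q\le\tau^q_{1/2}]=1/2$ for $\mathbf{x},\mathbf{y}$ iid uniform on the torus $\mathbb{T}^d=\mathbb{R}^d/2\mathbb{Z}^d$, where $\|\mathbf{x}-\mathbf{y}\|_q=(\sum_{i=1}^d|x_i-y_i|_C^q)^{1/q}$ and $|\cdot|_C\in[0,1]$ is circular distance on a circle of circumference 2 (equivalently, $\mathbf{P}[\sum_{i=1}^dU_i^q\le(\tau^q_{1/2})^q]=1/2$ for iid uniform $U_i$ on $[0,1]$). *)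

theory Defs
  imports "HOL-Probability.Probability" "HOL-Library.Landau_Symbols"
begin

definition unif_cube :: "nat \<Rightarrow> (nat \<Rightarrow> real) measure" where
  "unif_cube n = PiM {..<n} (\<lambda>_. uniform_measure lborel {0..1::real})"

definition sumpow_cdf :: "nat \<Rightarrow> real \<Rightarrow> real \<Rightarrow> real" where
  "sumpow_cdf n q t =
     measure (unif_cube n) {u \<in> space (unif_cube n). (\<Sum>i<n. u i powr q) \<le> t}"

definition tau_half :: "nat \<Rightarrow> real \<Rightarrow> real" where
  "tau_half d q = (THE r. r \<ge> 0 \<and> sumpow_cdf d q (r powr q) = 1/2)"

definition psi :: "nat \<Rightarrow> real \<Rightarrow> real \<Rightarrow> real" where
  "psi d q l = sumpow_cdf (d - 1) q (tau_half d q powr q)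
             - sumpow_cdf (d - 1) q (tau_half d q powr q - l powr q)"

end

theory Submission
  imports Defs
begin

text \<open>
  Split the density of each coordinate as \<open>1 = w y + (1 - w y)\<close> with \<open>w y = min 1 (y\<^sup>q\<^sup>-\<^sup>1)\<close>.
  Under the weight \<open>w\<close> the law of \<open>U\<^sup>q\<close> becomes \<open>1/q\<close> times the uniform law on \<open>[0,1]\<close>
  (substitute \<open>v = y\<^sup>q\<close>), so expanding the product over coordinates bounds the probability
  that \<open>\<Sum>\<^sub>i U\<^sub>i\<^sup>q\<close> falls into an interval of length \<open>h\<close> by an average, over \<open>k \<sim> Bin(n, 1/q)\<close>,
  of the concentration of a sum of \<open>k\<close> independent uniforms. Writing each uniform as a fair
  coin with values \<open>0, 1/2\<close> plus a uniform on \<open>[0,1/2)\<close>, that concentration is at most the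
  largest point mass of \<open>Bin(k, 1/2)\<close> times \<open>2h\<close>, hence at most \<open>2h / \<surd>(k+1)\<close>. A Chernoff
  bound on the event \<open>k < n/(4q)\<close> gives \<open>F(t) - F(t - h) \<le> exp(-n/(4q)) + 4h\<surd>(q/n)\<close>
  uniformly in \<open>t\<close>, so the value of \<open>\<tau>\<close> plays no role. With \<open>h = \<ell>\<^sup>q\<close> and \<open>q = o(d / log d)\<close>
  the exponential term is at most \<open>1/d\<close>, and integrating over \<open>\<ell> \<in> [0,1]\<close> gives both bounds.
\<close>

section \<open>Averaging operators on nonnegative functions\<close>

text \<open>\<open>unit_avg g c = E g(c + U)\<close> and \<open>half_avg g c = E g(c + U/2)\<close> for \<open>U\<close> uniform on \<open>[0,1)\<close>, so
  \<open>(unit_avg ^^ k) g c = E g(c + U\<^sub>1 + \<dots> + U\<^sub>k)\<close> with independent \<open>U\<^sub>i\<close>.\<close>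

definition unit_avg :: "(real \<Rightarrow> ennreal) \<Rightarrow> real \<Rightarrow> ennreal" where
  "unit_avg g c = (\<integral>\<^sup>+v. g (c + v) * indicator {0..<1} v \<partial>lborel)"

definition half_avg :: "(real \<Rightarrow> ennreal) \<Rightarrow> real \<Rightarrow> ennreal" where
  "half_avg g c = (\<integral>\<^sup>+w. g (c + w/2) * indicator {0..<1} w \<partial>lborel)"

lemma unit_avg_measurable[measurable]:
  assumes [measurable]: "g \<in> borel_measurable borel"
  shows "unit_avg g \<in> borel_measurable borel"
  unfolding unit_avg_def by measurable

lemma half_avg_measurable[measurable]:
  assumes [measurable]: "g \<in> borel_measurable borel"
  shows "half_avg g \<in> borel_measurable borel"
  unfolding half_avg_def by measurable

lemma funpow_borel_measurable:
  fixes F :: "(real \<Rightarrow> ennreal) \<Rightarrow> (real \<Rightarrow> ennreal)"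
  assumes "\<And>g. g \<in> borel_measurable borel \<Longrightarrow> F g \<in> borel_measurable borel"
    and "g \<in> borel_measurable borel"
  shows "(F ^^ k) g \<in> borel_measurable borel"
  by (induction k) (simp_all add: assms)

lemma unit_avg_funpow_measurable[measurable]:
  "g \<in> borel_measurable borel \<Longrightarrow> (unit_avg ^^ k) g \<in> borel_measurable borel"
  by (rule funpow_borel_measurable) auto

lemma half_avg_funpow_measurable[measurable]:
  "g \<in> borel_measurable borel \<Longrightarrow> (half_avg ^^ k) g \<in> borel_measurable borel"
  by (rule funpow_borel_measurable) auto

lemma unit_avg_cmult:
  assumes [measurable]: "f \<in> borel_measurable borel"
  shows "unit_avg (\<lambda>x. K * f x) c = K * unit_avg f c"
  unfolding unit_avg_def by (subst nn_integral_cmult[symmetric]) (auto simp: mult_ac)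

lemma unit_avg_sum:
  assumes [measurable]: "\<And>j. j \<in> S \<Longrightarrow> f j \<in> borel_measurable borel"
  shows "unit_avg (\<lambda>x. \<Sum>j\<in>S. f j x) c = (\<Sum>j\<in>S. unit_avg (f j) c)"
  unfolding unit_avg_def by (subst nn_integral_sum[symmetric]) (auto simp: sum_distrib_right)

lemma nn_integral_lborel_half_scale:
  fixes f :: "real \<Rightarrow> ennreal"
  assumes [measurable]: "f \<in> borel_measurable borel"
  shows "(\<integral>\<^sup>+x. f x \<partial>lborel) = ennreal (1/2) * (\<integral>\<^sup>+x. f (t + x/2) \<partial>lborel)"
  using nn_integral_real_affine[of f "1/2" t] by simp

lemma unit_avg_split_halves:
  assumes [measurable]: "g \<in> borel_measurable borel"
  shows "unit_avg g c = ennreal (1/2) * half_avg g c + ennreal (1/2) * half_avg g (c + 1/2)"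
proof -
  have half: "(\<integral>\<^sup>+v. g (c + v) * indicator {s..<s + 1/2} v \<partial>lborel) = ennreal (1/2) * half_avg g (c + s)"
    for s :: real
  proof -
    have "(\<integral>\<^sup>+v. g (c + v) * indicator {s..<s + 1/2} v \<partial>lborel)
        = ennreal (1/2) * (\<integral>\<^sup>+x. g (c + (s + x/2)) * indicator {s..<s + 1/2} (s + x/2) \<partial>lborel)"
      by (rule nn_integral_lborel_half_scale) measurable
    also have "(\<lambda>x. g (c + (s + x/2)) * indicator {s..<s + 1/2} (s + x/2)) = (\<lambda>x. g (c + s + x/2) * indicator {0..<1} x)"
      by (auto simp: indicator_def fun_eq_iff add_ac)
    finally show ?thesis unfolding half_avg_def .
  qed
  have "\<And>v::real. indicator {0..<1} v = (indicator {0..<0 + 1/2} v + indicator {1/2..<1/2 + 1/2} v :: ennreal)"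
    by (auto simp: indicator_def)
  then have "unit_avg g c = (\<integral>\<^sup>+v. g (c + v) * indicator {0..<0 + 1/2} v + g (c + v) * indicator {1/2..<1/2 + 1/2} v \<partial>lborel)"
    unfolding unit_avg_def by (simp add: distrib_left)
  also have "\<dots> = (\<integral>\<^sup>+v. g (c + v) * indicator {0..<0 + 1/2} v \<partial>lborel) + (\<integral>\<^sup>+v. g (c + v) * indicator {1/2..<1/2 + 1/2} v \<partial>lborel)"
    by (rule nn_integral_add) auto
  finally show ?thesis unfolding half by simp
qed

lemma sum_binomial_Suc_shift:
  fixes a :: "nat \<Rightarrow> 'a::comm_semiring_1"
  shows "(\<Sum>j\<le>k. of_nat (k choose j) * (a j + a (Suc j))) = (\<Sum>j\<le>Suc k. of_nat (Suc k choose j) * a j)"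
proof -
  let ?X = "\<Sum>j\<le>k. of_nat (k choose j) * a (Suc j)"
  let ?Y = "\<Sum>j\<le>k. of_nat (k choose Suc j) * a (Suc j)"
  let ?Z = "\<Sum>j\<le>k. of_nat (k choose j) * a j"
  have "(\<Sum>j\<le>Suc k. of_nat (Suc k choose j) * a j) = a 0 + (\<Sum>j\<le>k. of_nat (Suc k choose Suc j) * a (Suc j))"
    by (subst sum.atMost_Suc_shift) simp
  also have "\<dots> = (a 0 + ?Y) + ?X"
    by (simp add: sum.distrib distrib_right add_ac)
  also have "a 0 + ?Y = ?Z"
  proof (cases k)
    case (Suc k')
    have "?Z = a 0 + (\<Sum>j\<le>k'. of_nat (k choose Suc j) * a (Suc j))"
      unfolding Suc by (subst sum.atMost_Suc_shift) simp
    moreover have "?Y = (\<Sum>j\<le>k'. of_nat (k choose Suc j) * a (Suc j))"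
      unfolding Suc sum.atMost_Suc by (simp add: binomial_eq_0 del: binomial_Suc_Suc)
    ultimately show ?thesis by simp
  qed simp
  finally show ?thesis by (simp add: sum.distrib distrib_left)
qed

text \<open>Each uniform on \<open>[0,1)\<close> is a fair coin on \<open>{0, 1/2}\<close> plus a uniform on \<open>[0,1/2)\<close>.\<close>

lemma unit_avg_funpow_expand:
  assumes [measurable]: "g \<in> borel_measurable borel"
  shows "(unit_avg ^^ k) g c
    = ennreal ((1/2)^k) * (\<Sum>j\<le>k. of_nat (k choose j) * (half_avg ^^ k) g (c + real j / 2))"
proof (induction k arbitrary: c)
  case 0 then show ?case by simp
next
  case (Suc k)
  let ?A = "\<lambda>j. (half_avg ^^ Suc k) g (c + real j / 2)"
  have IH: "(unit_avg ^^ k) g = (\<lambda>x. ennreal ((1/2)^k) * (\<Sum>j\<le>k. of_nat (k choose j) * (half_avg ^^ k) g (x + real j / 2)))"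
    using Suc by auto
  have shifted: "unit_avg (\<lambda>x. (half_avg ^^ k) g (x + real j / 2)) c = ennreal (1/2) * (?A j + ?A (Suc j))" for j
  proof -
    have "half_avg (\<lambda>x. (half_avg ^^ k) g (x + real j / 2)) y = (half_avg ^^ Suc k) g (y + real j / 2)" for y
      by (simp add: half_avg_def add_ac)
    moreover have "c + 1/2 + real j / 2 = c + real (Suc j) / 2" by (simp add: field_simps)
    ultimately show ?thesis
      by (subst unit_avg_split_halves) (measurable, simp only: distrib_left)
  qed
  have "(unit_avg ^^ Suc k) g c
      = ennreal ((1/2)^k) * unit_avg (\<lambda>x. \<Sum>j\<le>k. of_nat (k choose j) * (half_avg ^^ k) g (x + real j / 2)) c"
    unfolding funpow.simps comp_def IH by (rule unit_avg_cmult) measurable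
  also have "\<dots> = ennreal ((1/2)^k) * (\<Sum>j\<le>k. of_nat (k choose j) * unit_avg (\<lambda>x. (half_avg ^^ k) g (x + real j / 2)) c)"
    by (subst unit_avg_sum; (subst unit_avg_cmult)?) measurable
  also have "\<dots> = ennreal ((1/2)^k) * ennreal (1/2) * (\<Sum>j\<le>k. of_nat (k choose j) * (?A j + ?A (Suc j)))"
    unfolding shifted by (simp add: sum_distrib_left mult_ac)
  also have "ennreal ((1/2)^k) * ennreal (1/2) = ennreal ((1/2)^Suc k)"
    by (subst ennreal_mult[symmetric]; simp add: mult.commute)
  also have "(\<Sum>j\<le>k. of_nat (k choose j) * (?A j + ?A (Suc j))) = (\<Sum>j\<le>Suc k. of_nat (Suc k choose j) * ?A j)"
    by (rule sum_binomial_Suc_shift)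
  finally show ?case .
qed

lemma half_avg_funpow_shift_sum_le:
  assumes "finite S" and [measurable]: "G \<in> borel_measurable borel"
    and "\<And>x. (\<Sum>j\<in>S. a j * G (x + s j)) \<le> K"
  shows "(\<Sum>j\<in>S. a j * (half_avg ^^ m) G (c + s j)) \<le> K"
  using assms(2,3)
proof (induction m arbitrary: G c)
  case 0 then show ?case by simp
next
  case (Suc m)
  note Suc.prems(1)[measurable]
  have "(\<Sum>j\<in>S. a j * half_avg G (x + s j)) \<le> K" for x
  proof -
    have "(\<Sum>j\<in>S. a j * half_avg G (x + s j)) = (\<Sum>j\<in>S. \<integral>\<^sup>+w. a j * (G (x + w/2 + s j) * indicator {0..<1} w) \<partial>lborel)"
      by (intro sum.cong refl, subst nn_integral_cmult) (measurable, simp add: half_avg_def add_ac)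
    also have "\<dots> = (\<integral>\<^sup>+w. (\<Sum>j\<in>S. a j * G ((x + w/2) + s j)) * indicator {0..<1} w \<partial>lborel)"
      by (subst nn_integral_sum[symmetric]) (measurable, simp add: sum_distrib_right mult.assoc)
    also have "\<dots> \<le> (\<integral>\<^sup>+w. K * indicator {0..<1::real} w \<partial>lborel)"
      by (intro nn_integral_mono mult_right_mono Suc.prems(2)) simp
    also have "\<dots> = K" by (simp add: nn_integral_cmult)
    finally show ?thesis .
  qed
  then have "(\<Sum>j\<in>S. a j * (half_avg ^^ m) (half_avg G) (c + s j)) \<le> K"
    by (intro Suc.IH) auto
  then show ?case by (simp add: funpow_Suc_right del: funpow.simps)
qed

lemma sum_indicator_unit_intervals_le_1:
  "(\<Sum>j\<le>k. indicator {real j..<real j + 1} u) \<le> (1::ennreal)"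
proof -
  have "(\<Sum>j\<le>k. indicator {real j..<real j + 1} u)
      = (\<Sum>j\<le>k. if j = nat \<lfloor>u\<rfloor> then indicator {real j..<real j + 1} u else (0::ennreal))"
  proof (rule sum.cong)
    fix j
    show "indicator {real j..<real j + 1} u = (if j = nat \<lfloor>u\<rfloor> then indicator {real j..<real j + 1} u else (0::ennreal))"
    proof (cases "u \<in> {real j..<real j + 1}")
      case True
      then have "\<lfloor>u\<rfloor> = int j" by (simp add: floor_eq_iff)
      then show ?thesis by simp
    qed (auto simp: indicator_def)
  qed simp
  also have "\<dots> \<le> 1" by (simp add: sum.delta indicator_def)
  finally show ?thesis .
qed

text \<open>The windows \<open>[x + j/2, x + j/2 + 1/2)\<close> are disjoint, so their masses add up to at most
  twice the length of the interval.\<close>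

lemma sum_half_avg_indicator_le:
  assumes ab: "a \<le> b"
  shows "(\<Sum>j\<le>k. half_avg (indicator {a<..b}) (x + real j / 2)) \<le> ennreal (2 * (b - a))"
proof -
  define f where "f u = (indicator {a<..b} (x + u/2) :: ennreal)" for u :: real
  have [measurable]: "f \<in> borel_measurable borel" unfolding f_def by measurable
  have window: "half_avg (indicator {a<..b}) (x + real j / 2) = (\<integral>\<^sup>+u. f u * indicator {real j..<real j + 1} u \<partial>lborel)" for j
  proof -
    have "(\<integral>\<^sup>+u. f u * indicator {real j..<real j + 1} u \<partial>lborel)
        = (\<integral>\<^sup>+w. f (real j + w) * indicator {real j..<real j + 1} (real j + w) \<partial>lborel)"
      using nn_integral_real_affine[of "\<lambda>u. f u * indicator {real j..<real j + 1} u" 1 "real j"] by simp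
    also have "\<dots> = half_avg (indicator {a<..b}) (x + real j / 2)"
      unfolding half_avg_def f_def by (auto intro!: nn_integral_cong simp: indicator_def add_divide_distrib add_ac)
    finally show ?thesis by simp
  qed
  have "(\<Sum>j\<le>k. half_avg (indicator {a<..b}) (x + real j / 2))
      = (\<integral>\<^sup>+u. f u * (\<Sum>j\<le>k. indicator {real j..<real j + 1} u) \<partial>lborel)"
    unfolding window by (subst nn_integral_sum[symmetric]) (measurable, simp add: sum_distrib_left)
  also have "\<dots> \<le> (\<integral>\<^sup>+u. f u \<partial>lborel)"
    using mult_left_mono[OF sum_indicator_unit_intervals_le_1] by (intro nn_integral_mono) force
  also have "(\<integral>\<^sup>+u. f u \<partial>lborel) = (ennreal 2 * ennreal (1/2)) * (\<integral>\<^sup>+u. f u \<partial>lborel)"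
    by (subst ennreal_mult[symmetric]; simp)
  also have "ennreal 2 * ennreal (1/2) * (\<integral>\<^sup>+u. f u \<partial>lborel) = ennreal 2 * ennreal (b - a)"
    using nn_integral_lborel_half_scale[of "indicator {a<..b}" x] ab by (simp add: f_def mult.assoc)
  also have "ennreal 2 * ennreal (b - a) = ennreal (2 * (b - a))"
    using ab by (subst ennreal_mult[symmetric]) auto
  finally show ?thesis .
qed

lemma unit_avg_funpow_le_1:
  assumes [measurable]: "g \<in> borel_measurable borel" and "\<And>x. g x \<le> 1"
  shows "(unit_avg ^^ k) g c \<le> 1"
proof (induction k arbitrary: c)
  case 0 then show ?case using assms by simp
next
  case (Suc k)
  have "(unit_avg ^^ Suc k) g c = (\<integral>\<^sup>+v. (unit_avg ^^ k) g (c + v) * indicator {0..<1} v \<partial>lborel)"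
    by (simp add: unit_avg_def)
  also have "\<dots> \<le> (\<integral>\<^sup>+v. 1 * indicator {0..<1::real} v \<partial>lborel)"
    by (intro nn_integral_mono mult_right_mono Suc.IH) auto
  finally show ?case by simp
qed

lemma unit_avg_funpow_indicator_le:
  assumes ab: "a \<le> b" and k: "k \<ge> 1"
  shows "(unit_avg ^^ k) (indicator {a<..b}) c \<le> ennreal ((1/2)^k * real (k choose (k div 2)) * (2 * (b - a)))"
proof -
  obtain m where km: "k = Suc m" using k by (cases k) auto
  let ?G = "half_avg (indicator {a<..b})"
  have "(\<Sum>j\<le>k. of_nat (k choose j) * (half_avg ^^ m) ?G (c + real j / 2))
      \<le> of_nat (k choose (k div 2)) * ennreal (2 * (b - a))"
  proof (rule half_avg_funpow_shift_sum_le)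
    fix x
    have "(\<Sum>j\<le>k. of_nat (k choose j) * ?G (x + real j / 2)) \<le> (\<Sum>j\<le>k. of_nat (k choose (k div 2)) * ?G (x + real j / 2))"
      by (intro sum_mono mult_right_mono) (auto simp: binomial_maximum)
    also have "\<dots> \<le> of_nat (k choose (k div 2)) * ennreal (2 * (b - a))"
      unfolding sum_distrib_left[symmetric] by (intro mult_left_mono sum_half_avg_indicator_le ab) auto
    finally show "(\<Sum>j\<le>k. of_nat (k choose j) * ?G (x + real j / 2)) \<le> of_nat (k choose (k div 2)) * ennreal (2 * (b - a))" .
  qed auto
  moreover have "(half_avg ^^ k) (indicator {a<..b}) = (half_avg ^^ m) ?G"
    unfolding km by (simp add: funpow_Suc_right del: funpow.simps)
  ultimately have "(unit_avg ^^ k) (indicator {a<..b}) c \<le> ennreal ((1/2)^k) * (of_nat (k choose (k div 2)) * ennreal (2 * (b - a)))"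
    by (subst unit_avg_funpow_expand) (auto intro: mult_left_mono)
  also have "\<dots> = ennreal ((1/2)^k * real (k choose (k div 2)) * (2 * (b - a)))"
    using ab by (simp add: ennreal_mult ennreal_of_nat_eq_real_of_nat mult.assoc)
  finally show ?thesis .
qed

section \<open>The central binomial coefficient\<close>

lemma central_binomial_Suc_eq: "(Suc (Suc (2*m)) choose Suc m) = 2 * (Suc (2*m) choose m)"
proof -
  have "Suc (Suc (2*m)) * (Suc (2*m) choose m) = (Suc (Suc (2*m)) choose Suc m) * Suc m"
    by (rule Suc_times_binomial_eq)
  then have "2 * (Suc (2*m) choose m) * Suc m = (Suc (Suc (2*m)) choose Suc m) * Suc m"
    by (simp add: mult_ac del: binomial_Suc_Suc)
  then show ?thesis by (simp only: mult_cancel2) simp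
qed

lemma central_binomial_Suc_mult:
  "(Suc (Suc (2*m)) choose Suc m) * Suc m = 2 * ((2*m + 1) * ((2*m) choose m))"
proof -
  have "Suc (2*m) * ((2*m) choose m) = (Suc (2*m) choose Suc m) * Suc m"
    by (rule Suc_times_binomial_eq)
  moreover have "(Suc (2*m) choose Suc m) = (Suc (2*m) choose m)"
    using binomial_symmetric[of "Suc m" "Suc (2*m)"] by simp
  ultimately show ?thesis
    unfolding central_binomial_Suc_eq by (simp del: binomial_Suc_Suc)
qed

lemma central_binomial_sq_le: "real ((2*m) choose m)^2 * (3 * real m + 1) \<le> 16^m"
proof (induction m)
  case 0 then show ?case by simp
next
  case (Suc m)
  define c where "c = real ((2*m) choose m)"
  define d where "d = real (Suc (Suc (2*m)) choose Suc m)"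
  have "real ((Suc (Suc (2*m)) choose Suc m) * Suc m) = real (2 * ((2*m + 1) * ((2*m) choose m)))"
    by (simp only: central_binomial_Suc_mult)
  then have rec: "d * (real m + 1) = 2 * (2 * real m + 1) * c"
    unfolding c_def d_def by (simp only: of_nat_mult of_nat_Suc of_nat_add) (simp add: algebra_simps)
  have poly: "4 * (2 * real m + 1)^2 * (3 * real m + 4) \<le> 16 * (real m + 1)^2 * (3 * real m + 1)"
    by (simp add: power2_eq_square algebra_simps)
  have "d^2 * (3 * real (Suc m) + 1) * (real m + 1)^2 = (d * (real m + 1))^2 * (3 * real m + 4)"
    by (simp add: power2_eq_square algebra_simps)
  also have "\<dots> = 4 * (2 * real m + 1)^2 * (3 * real m + 4) * c^2"
    unfolding rec by (simp add: power2_eq_square algebra_simps)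
  also have "\<dots> \<le> 16 * (real m + 1)^2 * (c^2 * (3 * real m + 1))"
    using mult_right_mono[OF poly, of "c^2"] by (simp add: algebra_simps)
  also have "\<dots> \<le> 16 * (real m + 1)^2 * 16^m"
    using Suc.IH unfolding c_def by (intro mult_left_mono) auto
  finally have "d^2 * (3 * real (Suc m) + 1) * (real m + 1)^2 \<le> 16^Suc m * (real m + 1)^2"
    by (simp add: algebra_simps)
  then have "d^2 * (3 * real (Suc m) + 1) \<le> 16^Suc m"
    by (rule mult_right_le_imp_le) auto
  moreover have "2 * Suc m = Suc (Suc (2*m))" by simp
  ultimately show ?case unfolding d_def by simp
qed

lemma binomial_half_sq_le: "real (k choose (k div 2))^2 * (real k + 1) \<le> 4^k"
proof (cases "even k")
  case True
  then obtain m where k: "k = 2*m" by (auto elim: evenE)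
  have "real ((2*m) choose m)^2 * (2 * real m + 1) \<le> real ((2*m) choose m)^2 * (3 * real m + 1)"
    by (intro mult_left_mono) auto
  also have "\<dots> \<le> 16^m" by (rule central_binomial_sq_le)
  also have "(16::real)^m = 4^(2*m)" by (simp add: power_mult)
  finally show ?thesis unfolding k by simp
next
  case False
  then obtain m where k: "k = Suc (2*m)" by (metis oddE Suc_eq_plus1)
  define e where "e = real (Suc (2*m) choose m)"
  have "2 * Suc m = Suc (Suc (2*m))" by simp
  then have "real ((2 * Suc m) choose Suc m) = 2 * e"
    unfolding e_def using central_binomial_Suc_eq[of m] by simp
  with central_binomial_sq_le[of "Suc m"] have A: "4 * e^2 * (3 * real m + 4) \<le> 16 * 16^m"
    by (simp add: power2_eq_square algebra_simps del: binomial_Suc_Suc)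
  have "e^2 * (real k + 1) * (3 * real m + 4) = e^2 * (3 * real m + 4) * (2 * real m + 2)"
    unfolding k by (simp add: algebra_simps)
  also have "\<dots> \<le> 4 * 16^m * (2 * real m + 2)"
    using A by (intro mult_right_mono) auto
  also have "\<dots> \<le> 4 * 16^m * (3 * real m + 4)"
    by (intro mult_left_mono) auto
  finally have "e^2 * (real k + 1) \<le> 4 * 16^m"
    by (rule mult_right_le_imp_le) auto
  also have "4 * (16::real)^m = 4^k" unfolding k by (simp add: power_mult)
  finally show ?thesis unfolding e_def k by simp
qed

lemma binomial_half_le_inverse_sqrt: "(1/2)^k * real (k choose (k div 2)) \<le> 1 / sqrt (real k + 1)"
proof -
  define x where "x = (1/2)^k * real (k choose (k div 2))"
  have "x^2 * (real k + 1) = (1/4)^k * (real (k choose (k div 2))^2 * (real k + 1))"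
    unfolding x_def by (simp add: power_mult_distrib power2_eq_square mult_ac flip: power_mult_distrib)
  also have "\<dots> \<le> (1/4)^k * 4^k" by (intro mult_left_mono binomial_half_sq_le) auto
  also have "\<dots> = 1" by (simp add: power_mult_distrib[symmetric])
  finally have "(x * sqrt (real k + 1))^2 \<le> 1^2" by (simp add: power_mult_distrib)
  then have "x * sqrt (real k + 1) \<le> 1"
    by (rule power2_le_imp_le) simp
  then show ?thesis unfolding x_def[symmetric] by (simp add: field_simps)
qed

section \<open>Concentration of sums of uniform and of \<open>q\<close>-th powers of uniform variables\<close>

definition conc_bound :: "real \<Rightarrow> nat \<Rightarrow> real" where
  "conc_bound h k = (if k = 0 then 1 else min 1 (2 * h / sqrt (real k + 1)))"

lemma conc_bound_nonneg: "h \<ge> 0 \<Longrightarrow> conc_bound h k \<ge> 0"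
  and conc_bound_le_1: "conc_bound h k \<le> 1"
  by (simp_all add: conc_bound_def)

lemma unit_avg_funpow_indicator_le_conc_bound:
  assumes ab: "a \<le> b"
  shows "(unit_avg ^^ k) (indicator {a<..b}) c \<le> ennreal (conc_bound (b - a) k)"
proof (cases "k = 0")
  case False
  have "(unit_avg ^^ k) (indicator {a<..b}) c \<le> ennreal ((1/2)^k * real (k choose (k div 2)) * (2 * (b - a)))"
    using False by (intro unit_avg_funpow_indicator_le ab) simp
  also have "(1/2)^k * real (k choose (k div 2)) * (2 * (b - a)) \<le> 1 / sqrt (real k + 1) * (2 * (b - a))"
    using ab by (intro mult_right_mono binomial_half_le_inverse_sqrt) auto
  finally have "(unit_avg ^^ k) (indicator {a<..b}) c \<le> ennreal (2 * (b - a) / sqrt (real k + 1))"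
    by (simp add: ennreal_leI order_trans)
  moreover have "(unit_avg ^^ k) (indicator {a<..b}) c \<le> 1"
    by (rule unit_avg_funpow_le_1) (auto simp: indicator_def)
  ultimately have "(unit_avg ^^ k) (indicator {a<..b}) c \<le> min (ennreal 1) (ennreal (2 * (b - a) / sqrt (real k + 1)))"
    by simp
  also have "\<dots> = ennreal (conc_bound (b - a) k)"
    using False ab by (subst min_ennreal) (auto simp: conc_bound_def)
  finally show ?thesis .
qed (simp add: conc_bound_def indicator_def)

definition unif01 :: "real measure" where
  "unif01 = uniform_measure lborel {0..1}"

lemma sets_unif01[simp, measurable_cong]: "sets unif01 = sets borel"
  by (simp add: unif01_def)

lemma space_unif01[simp]: "space unif01 = UNIV"
  by (simp add: unif01_def)

lemma prob_space_unif01: "prob_space unif01"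
  unfolding unif01_def by (rule prob_space_uniform_measure) auto

lemma product_sigma_finite_unif01: "product_sigma_finite (\<lambda>_. unif01)"
  unfolding product_sigma_finite_def using prob_space_unif01 by (simp add: prob_space_imp_sigma_finite)

lemma nn_integral_unif01:
  assumes [measurable]: "f \<in> borel_measurable borel"
  shows "(\<integral>\<^sup>+x. f x \<partial>unif01) = (\<integral>\<^sup>+x. f x * indicator {0..1} x \<partial>lborel)"
  unfolding unif01_def by (subst nn_integral_uniform_measure) (auto simp: divide_ennreal_def)

lemma unif_cube_eq_PiM_unif01: "unif_cube n = PiM {..<n} (\<lambda>_. unif01)"
  by (simp add: unif_cube_def unif01_def)

text \<open>On \<open>[0,1]\<close> the weight equals \<open>y\<^sup>q\<^sup>-\<^sup>1\<close>, the Jacobian of \<open>y \<mapsto> y\<^sup>q\<close> up to the factor \<open>q\<close>;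
  the cap at \<open>1\<close> only keeps the complementary weight \<open>1 - powr_weight q y\<close> nonnegative everywhere.\<close>

definition powr_weight :: "real \<Rightarrow> real \<Rightarrow> real" where
  "powr_weight q y = min 1 (y powr (q - 1))"

lemma powr_weight_measurable[measurable]: "powr_weight q \<in> borel_measurable borel"
  unfolding powr_weight_def by measurable

lemma powr_weight_nonneg: "0 \<le> powr_weight q y" and powr_weight_le_1: "powr_weight q y \<le> 1"
  by (auto simp: powr_weight_def)

lemma powr_weight_eq: "q \<ge> 1 \<Longrightarrow> y \<in> {0..1} \<Longrightarrow> powr_weight q y = y powr (q - 1)"
  by (simp add: powr_weight_def powr_le1)

definition weighted_powr_avg :: "real \<Rightarrow> (real \<Rightarrow> ennreal) \<Rightarrow> real \<Rightarrow> ennreal" where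
  "weighted_powr_avg q g c = (\<integral>\<^sup>+y. ennreal (powr_weight q y) * g (c + y powr q) \<partial>unif01)"

lemma weighted_powr_avg_measurable[measurable]:
  assumes [measurable]: "g \<in> borel_measurable borel"
  shows "weighted_powr_avg q g \<in> borel_measurable borel"
proof -
  have "weighted_powr_avg q g = (\<lambda>c. \<integral>\<^sup>+y. ennreal (powr_weight q y) * g (c + y powr q) * indicator {0..1} y \<partial>lborel)"
    unfolding weighted_powr_avg_def by (subst nn_integral_unif01) auto
  also have "\<dots> \<in> borel_measurable borel" by measurable
  finally show ?thesis .
qed

lemma weighted_powr_avg_funpow_measurable[measurable]:
  "g \<in> borel_measurable borel \<Longrightarrow> (weighted_powr_avg q ^^ k) g \<in> borel_measurable borel"
  by (rule funpow_borel_measurable) auto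

text \<open>Extended by \<open>0\<close> to the negative axis, \<open>y\<^sup>q\<close> is differentiable also at \<open>0\<close>, as the change of
  variables \<open>nn_integral_substitution_aux\<close> requires on the closed interval \<open>[0,1]\<close>.\<close>

lemma has_real_derivative_powr_pos_part:
  assumes q: "q > 1" and x: "0 \<le> x"
  shows "((\<lambda>y::real. if y > 0 then y powr q else 0) has_real_derivative (q * x powr (q - 1))) (at x)"
proof (cases "x = 0")
  case False
  with x have "x > 0" by auto
  then show ?thesis
    by (intro has_field_derivative_transform_within_open[where S="{0<..}", OF has_real_derivative_powr])
       auto
next
  case True
  have "((\<lambda>y. ((if y > 0 then y powr q else 0) - (if x > 0 then x powr q else 0)) / (y - x)) \<longlongrightarrow> 0) (at x)"
  proof (rule Lim_null_comparison)
    show "\<forall>\<^sub>F y in at x. norm (((if y > 0 then y powr q else 0) - (if x > 0 then x powr q else 0)) / (y - x)) \<le> \<bar>y\<bar> powr (q - 1)"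
    proof (rule always_eventually, intro allI)
      fix y :: real
      show "norm (((if y > 0 then y powr q else 0) - (if x > 0 then x powr q else 0)) / (y - x)) \<le> \<bar>y\<bar> powr (q - 1)"
      proof (cases "y > 0")
        case True
        then have "y powr q / y = y powr (q - 1)" by (simp add: powr_diff)
        with True \<open>x = 0\<close> show ?thesis by simp
      qed (use \<open>x = 0\<close> in auto)
    qed
    have "((\<lambda>y. \<bar>y\<bar> powr (q - 1)) \<longlongrightarrow> \<bar>0\<bar> powr (q - 1)) (at x)"
      using q True by (intro tendsto_intros) auto
    then show "((\<lambda>y. \<bar>y\<bar> powr (q - 1)) \<longlongrightarrow> 0) (at x)" by simp
  qed
  then show ?thesis using True by (simp add: has_field_derivative_iff)
qed

lemma nn_integral_substitution_powr:
  assumes q: "q \<ge> 1" and [measurable]: "f \<in> borel_measurable borel"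
  shows "(\<integral>\<^sup>+v. f v * indicator {0..1} v \<partial>lborel)
       = ennreal q * (\<integral>\<^sup>+y. ennreal (y powr (q - 1)) * f (y powr q) * indicator {0..1} y \<partial>lborel)"
proof (cases "q = 1")
  case True
  have "AE y in lborel. y \<noteq> 0" by (rule AE_lborel_singleton)
  then have "(\<integral>\<^sup>+y. ennreal (y powr (q - 1)) * f (y powr q) * indicator {0..1} y \<partial>lborel)
      = (\<integral>\<^sup>+v. f v * indicator {0..1} v \<partial>lborel)"
    by (intro nn_integral_cong_AE, eventually_elim) (auto simp: True indicator_def)
  then show ?thesis using True by simp
next
  case False
  with q have q1: "q > 1" by simp
  let ?G = "\<lambda>y::real. if y > 0 then y powr q else 0"
  have "(\<integral>\<^sup>+v. f v * indicator {?G 0..?G 1} v \<partial>lborel)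
      = (\<integral>\<^sup>+y. f (?G y) * ennreal (q * y powr (q - 1)) * indicator {0..1} y \<partial>lborel)"
  proof (rule nn_integral_substitution_aux)
    show "\<And>x. x \<in> {0..1} \<Longrightarrow> (?G has_real_derivative q * x powr (q - 1)) (at x)"
      using has_real_derivative_powr_pos_part[OF q1] by auto
    show "continuous_on {0..1} (\<lambda>x::real. q * x powr (q - 1))"
      using q1 by (intro continuous_intros continuous_on_powr') auto
  qed (use q1 in auto)
  also have "\<dots> = (\<integral>\<^sup>+y. ennreal q * (ennreal (y powr (q - 1)) * f (y powr q) * indicator {0..1} y) \<partial>lborel)"
    by (intro nn_integral_cong) (use q1 in \<open>auto simp: indicator_def ennreal_mult mult_ac\<close>)
  finally show ?thesis by (subst (asm) nn_integral_cmult) auto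
qed

lemma weighted_powr_avg_eq_unit_avg:
  assumes q: "q \<ge> 1" and [measurable]: "g \<in> borel_measurable borel"
  shows "weighted_powr_avg q g c = ennreal (1/q) * unit_avg g c"
proof -
  have "weighted_powr_avg q g c = (\<integral>\<^sup>+y. ennreal (y powr (q - 1)) * g (c + y powr q) * indicator {0..1} y \<partial>lborel)"
    unfolding weighted_powr_avg_def
    by (subst nn_integral_unif01) (auto intro!: nn_integral_cong simp: powr_weight_eq q indicator_def)
  also have "\<dots> = ennreal (1/q) * (\<integral>\<^sup>+v. g (c + v) * indicator {0..1} v \<partial>lborel)"
  proof -
    have "ennreal (1/q) * ennreal q = 1" using q by (simp flip: ennreal_mult)
    then show ?thesis
      by (subst nn_integral_substitution_powr[OF q]) (measurable, simp add: mult.assoc[symmetric])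
  qed
  also have "(\<integral>\<^sup>+v. g (c + v) * indicator {0..1} v \<partial>lborel) = unit_avg g c"
    unfolding unit_avg_def using AE_lborel_singleton[of 1]
    by (intro nn_integral_cong_AE, eventually_elim) (auto simp: indicator_def)
  finally show ?thesis .
qed

lemma weighted_powr_avg_funpow_eq:
  assumes q: "q \<ge> 1" and [measurable]: "g \<in> borel_measurable borel"
  shows "(weighted_powr_avg q ^^ k) g c = ennreal ((1/q)^k) * (unit_avg ^^ k) g c"
proof (induction k arbitrary: c)
  case 0 then show ?case by simp
next
  case (Suc k)
  have IH: "(weighted_powr_avg q ^^ k) g = (\<lambda>x. ennreal ((1/q)^k) * (unit_avg ^^ k) g x)"
    using Suc by auto
  have "(weighted_powr_avg q ^^ Suc k) g c = ennreal (1/q) * unit_avg ((weighted_powr_avg q ^^ k) g) c"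
    by (simp add: weighted_powr_avg_eq_unit_avg[OF q])
  also have "\<dots> = ennreal (1/q) * ennreal ((1/q)^k) * (unit_avg ^^ Suc k) g c"
    unfolding IH by (subst unit_avg_cmult) (auto simp: mult.assoc)
  also have "ennreal (1/q) * ennreal ((1/q)^k) = ennreal ((1/q)^Suc k)"
    using q by (simp add: ennreal_mult[symmetric] mult_ac)
  finally show ?case .
qed

lemma nn_integral_PiM_weighted_sum_powr:
  assumes "finite A" and [measurable]: "g \<in> borel_measurable borel"
  shows "(\<integral>\<^sup>+x. g (c + (\<Sum>i\<in>A. x i powr q)) * (\<Prod>i\<in>A. ennreal (powr_weight q (x i))) \<partial>PiM A (\<lambda>_. unif01))
       = (weighted_powr_avg q ^^ card A) g c"
  using assms(1)
proof (induction A arbitrary: c rule: finite_induct)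
  case empty
  show ?case by (simp add: PiM_empty)
next
  case (insert i A)
  let ?I = "\<lambda>c. \<integral>\<^sup>+x. g (c + (\<Sum>j\<in>A. x j powr q)) * (\<Prod>j\<in>A. ennreal (powr_weight q (x j))) \<partial>PiM A (\<lambda>_. unif01)"
  have "(\<integral>\<^sup>+x. g (c + (\<Sum>j\<in>insert i A. x j powr q)) * (\<Prod>j\<in>insert i A. ennreal (powr_weight q (x j))) \<partial>PiM (insert i A) (\<lambda>_. unif01))
      = (\<integral>\<^sup>+y. (\<integral>\<^sup>+x. g (c + (\<Sum>j\<in>insert i A. (x(i := y)) j powr q))
           * (\<Prod>j\<in>insert i A. ennreal (powr_weight q ((x(i := y)) j))) \<partial>PiM A (\<lambda>_. unif01)) \<partial>unif01)"
    by (rule product_sigma_finite.product_nn_integral_insert_rev[OF product_sigma_finite_unif01 insert.hyps])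
       measurable
  also have "\<dots> = (\<integral>\<^sup>+y. (\<integral>\<^sup>+x. ennreal (powr_weight q y)
           * (g ((c + y powr q) + (\<Sum>j\<in>A. x j powr q)) * (\<Prod>j\<in>A. ennreal (powr_weight q (x j)))) \<partial>PiM A (\<lambda>_. unif01)) \<partial>unif01)"
  proof -
    have "(\<Sum>j\<in>A. (x(i := y)) j powr q) = (\<Sum>j\<in>A. x j powr q)"
      "(\<Prod>j\<in>A. ennreal (powr_weight q ((x(i := y)) j))) = (\<Prod>j\<in>A. ennreal (powr_weight q (x j)))"
      for x :: "_ \<Rightarrow> real" and y :: real
      using insert.hyps(2) by (auto intro!: sum.cong prod.cong)
    then show ?thesis
      using insert.hyps by (simp add: add_ac mult_ac)
  qed
  also have "\<dots> = (\<integral>\<^sup>+y. ennreal (powr_weight q y) * ?I (c + y powr q) \<partial>unif01)"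
    by (subst nn_integral_cmult) measurable
  also have "\<dots> = (\<integral>\<^sup>+y. ennreal (powr_weight q y) * (weighted_powr_avg q ^^ card A) g (c + y powr q) \<partial>unif01)"
    by (simp only: insert.IH)
  also have "\<dots> = (weighted_powr_avg q ^^ card (insert i A)) g c"
    using insert by (simp add: weighted_powr_avg_def)
  finally show ?case .
qed

lemma nn_integral_PiM_sum_powr_in_interval_le:
  assumes q: "q \<ge> 1" and ab: "a \<le> b" and A: "finite A"
  shows "(\<integral>\<^sup>+y. indicator {a<..b} (c + (\<Sum>i\<in>A. y i powr q)) * (\<Prod>i\<in>A. ennreal (powr_weight q (y i)))
           \<partial>PiM A (\<lambda>_. unif01))
       \<le> ennreal ((1/q)^card A * conc_bound (b - a) (card A))"
proof -
  have "(\<integral>\<^sup>+y. indicator {a<..b} (c + (\<Sum>i\<in>A. y i powr q)) * (\<Prod>i\<in>A. ennreal (powr_weight q (y i)))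
           \<partial>PiM A (\<lambda>_. unif01))
      = ennreal ((1/q)^card A) * (unit_avg ^^ card A) (indicator {a<..b}) c"
    by (subst nn_integral_PiM_weighted_sum_powr[OF A], measurable, rule weighted_powr_avg_funpow_eq[OF q])
       measurable
  also have "\<dots> \<le> ennreal ((1/q)^card A) * ennreal (conc_bound (b - a) (card A))"
    by (intro mult_left_mono unit_avg_funpow_indicator_le_conc_bound ab) auto
  also have "\<dots> = ennreal ((1/q)^card A * conc_bound (b - a) (card A))"
    using q ab by (simp add: ennreal_mult conc_bound_nonneg)
  finally show ?thesis .
qed

lemma nn_integral_unif01_powr_weight_compl:
  assumes q: "q \<ge> 1"
  shows "(\<integral>\<^sup>+y. ennreal (1 - powr_weight q y) \<partial>unif01) = ennreal (1 - 1/q)"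
proof -
  have "(\<integral>\<^sup>+y. ennreal (powr_weight q y) \<partial>unif01) = weighted_powr_avg q (\<lambda>_. 1) 0"
    by (simp add: weighted_powr_avg_def)
  also have "\<dots> = ennreal (1/q)"
    by (simp add: weighted_powr_avg_eq_unit_avg[OF q] unit_avg_def)
  finally have weight: "(\<integral>\<^sup>+y. ennreal (powr_weight q y) \<partial>unif01) = ennreal (1/q)" .
  have "(\<integral>\<^sup>+y. ennreal (1 - powr_weight q y) \<partial>unif01) + ennreal (1/q)
      = (\<integral>\<^sup>+y. ennreal (1 - powr_weight q y) + ennreal (powr_weight q y) \<partial>unif01)"
    unfolding weight[symmetric] by (rule nn_integral_add[symmetric]) auto
  also have "\<dots> = (\<integral>\<^sup>+y. 1 \<partial>unif01)"
    by (intro nn_integral_cong) (simp add: powr_weight_nonneg powr_weight_le_1 flip: ennreal_plus)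
  also have "\<dots> = 1" using prob_space.emeasure_space_1[OF prob_space_unif01] by simp
  finally have "(\<integral>\<^sup>+y. ennreal (1 - powr_weight q y) \<partial>unif01) = 1 - ennreal (1/q)"
    by (metis ennreal_add_diff_cancel_right ennreal_neq_top)
  also have "\<dots> = ennreal (1 - 1/q)"
    using q by (subst ennreal_minus[symmetric]) auto
  finally show ?thesis .
qed

text \<open>The coordinates in \<open>A\<close> carry the weight \<open>powr_weight q\<close> and are integrated out first, for
  fixed values of the remaining coordinates, which only shift the interval.\<close>

lemma nn_integral_PiM_split_weights_le:
  assumes q: "q \<ge> 1" and ab: "a \<le> b" and A: "A \<subseteq> {..<n}"
  shows "(\<integral>\<^sup>+x. indicator {a<..b} (\<Sum>i<n. x i powr q)
            * ((\<Prod>i\<in>A. ennreal (powr_weight q (x i))) * (\<Prod>i\<in>{..<n} - A. ennreal (1 - powr_weight q (x i))))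
          \<partial>PiM {..<n} (\<lambda>_. unif01))
     \<le> ennreal ((1/q)^card A * conc_bound (b - a) (card A)) * ennreal (1 - 1/q) ^ (n - card A)"
proof -
  define B where "B = {..<n} - A"
  have U: "{..<n} = B \<union> A" and dj: "B \<inter> A = {}" using A by (auto simp: B_def)
  have fA: "finite A" using A finite_subset by blast
  have fB: "finite B" by (simp add: B_def)
  have cB: "card B = n - card A" unfolding B_def using A by (simp add: card_Diff_subset fA)
  let ?P = "\<lambda>I. PiM I (\<lambda>_::nat. unif01)"
  let ?wA = "\<lambda>y. \<Prod>i\<in>A. ennreal (powr_weight q (y i))"
  let ?wB = "\<lambda>x. \<Prod>i\<in>B. ennreal (1 - powr_weight q (x i))"
  let ?F = "\<lambda>x. indicator {a<..b} (\<Sum>i\<in>B \<union> A. x i powr q) * (?wA x * ?wB x)"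
  let ?Phi = "ennreal ((1/q)^card A * conc_bound (b - a) (card A))"
  have "(\<integral>\<^sup>+x. indicator {a<..b} (\<Sum>i<n. x i powr q)
            * ((\<Prod>i\<in>A. ennreal (powr_weight q (x i))) * (\<Prod>i\<in>{..<n} - A. ennreal (1 - powr_weight q (x i))))
          \<partial>PiM {..<n} (\<lambda>_. unif01)) = (\<integral>\<^sup>+x. ?F x \<partial>?P (B \<union> A))"
    unfolding B_def[symmetric] unfolding U ..
  also have "\<dots> = (\<integral>\<^sup>+x. (\<integral>\<^sup>+y. ?F (merge B A (x, y)) \<partial>?P A) \<partial>?P B)"
    by (rule product_sigma_finite.product_nn_integral_fold[OF product_sigma_finite_unif01 dj fB fA])
       measurable
  also have "\<dots> \<le> (\<integral>\<^sup>+x. ?wB x * ?Phi \<partial>?P B)"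
  proof (rule nn_integral_mono)
    fix x
    let ?c = "\<Sum>i\<in>B. x i powr q"
    have "?F (merge B A (x, y)) = ?wB x * (indicator {a<..b} (?c + (\<Sum>i\<in>A. y i powr q)) * ?wA y)" for y
    proof -
      have "(\<Sum>i\<in>B \<union> A. merge B A (x, y) i powr q) = ?c + (\<Sum>i\<in>A. y i powr q)"
        using dj fA fB by (simp add: sum.union_disjoint)
      moreover have "?wA (merge B A (x, y)) = ?wA y" and "?wB (merge B A (x, y)) = ?wB x"
        using dj by (auto intro!: prod.cong)
      ultimately show ?thesis by (simp add: mult_ac)
    qed
    then have "(\<integral>\<^sup>+y. ?F (merge B A (x, y)) \<partial>?P A)
        = (\<integral>\<^sup>+y. ?wB x * (indicator {a<..b} (?c + (\<Sum>i\<in>A. y i powr q)) * ?wA y) \<partial>?P A)"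
      by (intro nn_integral_cong) simp
    also have "\<dots> = ?wB x * (\<integral>\<^sup>+y. indicator {a<..b} (?c + (\<Sum>i\<in>A. y i powr q)) * ?wA y \<partial>?P A)"
      by (rule nn_integral_cmult) measurable
    also have "\<dots> \<le> ?wB x * ?Phi"
      by (intro mult_left_mono nn_integral_PiM_sum_powr_in_interval_le q ab fA) simp
    finally show "(\<integral>\<^sup>+y. ?F (merge B A (x, y)) \<partial>?P A) \<le> ?wB x * ?Phi" .
  qed
  also have "\<dots> = (\<integral>\<^sup>+x. ?wB x \<partial>?P B) * ?Phi"
    by (rule nn_integral_multc) measurable
  also have "(\<integral>\<^sup>+x. ?wB x \<partial>?P B) = (\<Prod>i\<in>B. \<integral>\<^sup>+y. ennreal (1 - powr_weight q y) \<partial>unif01)"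
    by (rule product_sigma_finite.product_nn_integral_prod[OF product_sigma_finite_unif01 fB]) measurable
  also have "\<dots> = ennreal (1 - 1/q) ^ (n - card A)"
    using nn_integral_unif01_powr_weight_compl[OF q] cB by simp
  finally show ?thesis by (simp add: mult_ac)
qed

lemma sum_Pow_card:
  fixes f :: "nat \<Rightarrow> 'a::comm_semiring_1"
  assumes "finite S"
  shows "(\<Sum>A\<in>Pow S. f (card A)) = (\<Sum>k\<le>card S. of_nat (card S choose k) * f k)"
proof -
  have "(\<Sum>A\<in>Pow S. f (card A)) = (\<Sum>k\<le>card S. \<Sum>A\<in>{A. A \<in> Pow S \<and> card A = k}. f (card A))"
    by (rule sum.group[symmetric]) (use assms in \<open>auto intro: card_mono\<close>)
  also have "\<dots> = (\<Sum>k\<le>card S. of_nat (card {A. A \<subseteq> S \<and> card A = k}) * f k)"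
    by (intro sum.cong refl) simp
  also have "\<dots> = (\<Sum>k\<le>card S. of_nat (card S choose k) * f k)"
    by (simp add: n_subsets[OF assms])
  finally show ?thesis .
qed

lemma sum_Pow_prod_compl_weights:
  assumes "finite I" and "\<And>i. i \<in> I \<Longrightarrow> 0 \<le> w i" and "\<And>i. i \<in> I \<Longrightarrow> w i \<le> 1"
  shows "(\<Sum>A\<in>Pow I. (\<Prod>i\<in>A. ennreal (w i)) * (\<Prod>i\<in>I - A. ennreal (1 - w i))) = 1"
proof -
  have "(\<Sum>A\<in>Pow I. (\<Prod>i\<in>A. ennreal (w i)) * (\<Prod>i\<in>I - A. ennreal (1 - w i)))
      = (\<Prod>i\<in>I. ennreal (w i) + ennreal (1 - w i))"
    by (rule prod_add[symmetric]) (rule assms(1))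
  also have "\<dots> = 1"
    using assms(2,3) by (intro prod.neutral ballI) (simp flip: ennreal_plus)
  finally show ?thesis .
qed

definition binomial_expectation :: "nat \<Rightarrow> real \<Rightarrow> (nat \<Rightarrow> real) \<Rightarrow> real" where
  "binomial_expectation n p f = (\<Sum>k\<le>n. real (n choose k) * p^k * (1 - p)^(n - k) * f k)"

lemma emeasure_sum_powr_in_interval_le:
  assumes q: "q \<ge> 1" and ab: "a \<le> b"
  shows "emeasure (PiM {..<n} (\<lambda>_. unif01)) {x \<in> space (PiM {..<n} (\<lambda>_. unif01)). (\<Sum>i<n. x i powr q) \<in> {a<..b}}
    \<le> ennreal (binomial_expectation n (1/q) (conc_bound (b - a)))"
proof -
  let ?P = "PiM {..<n} (\<lambda>_. unif01)"
  let ?S = "\<lambda>x. \<Sum>i<n. x i powr q"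
  let ?T = "\<lambda>A x. indicator {a<..b} (?S x)
    * ((\<Prod>i\<in>A. ennreal (powr_weight q (x i))) * (\<Prod>i\<in>{..<n} - A. ennreal (1 - powr_weight q (x i))))"
  let ?G = "\<lambda>k. ennreal ((1/q)^k * conc_bound (b - a) k) * ennreal (1 - 1/q) ^ (n - k)"
  have q0: "0 \<le> 1 - 1/q" using q by simp
  have [measurable]: "A \<subseteq> {..<n} \<Longrightarrow> ?T A \<in> borel_measurable ?P" for A
    by (intro borel_measurable_times_ennreal borel_measurable_prod_ennreal) auto
  have expand: "indicator {x \<in> space ?P. ?S x \<in> {a<..b}} x = (\<Sum>A\<in>Pow {..<n}. ?T A x)"
    if "x \<in> space ?P" for x
    using that sum_Pow_prod_compl_weights[of "{..<n}" "\<lambda>i. powr_weight q (x i)"]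
    by (simp add: indicator_def powr_weight_nonneg powr_weight_le_1 flip: sum_distrib_left)
  have "emeasure ?P {x \<in> space ?P. ?S x \<in> {a<..b}} = (\<integral>\<^sup>+x. indicator {x \<in> space ?P. ?S x \<in> {a<..b}} x \<partial>?P)"
    by (rule nn_integral_indicator[symmetric]) measurable
  also have "\<dots> = (\<integral>\<^sup>+x. (\<Sum>A\<in>Pow {..<n}. ?T A x) \<partial>?P)"
    by (intro nn_integral_cong expand)
  also have "\<dots> = (\<Sum>A\<in>Pow {..<n}. \<integral>\<^sup>+x. ?T A x \<partial>?P)"
    by (rule nn_integral_sum) auto
  also have "\<dots> \<le> (\<Sum>A\<in>Pow {..<n}. ?G (card A))"
    by (intro sum_mono nn_integral_PiM_split_weights_le[OF q ab]) auto
  also have "\<dots> = (\<Sum>k\<le>n. of_nat (n choose k) * ?G k)"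
    using sum_Pow_card[of "{..<n}" ?G] by simp
  also have "\<dots> = (\<Sum>k\<le>n. ennreal (real (n choose k) * (1/q)^k * (1 - 1/q)^(n - k) * conc_bound (b - a) k))"
  proof (intro sum.cong refl)
    fix k
    have "0 \<le> (1/q)^k * conc_bound (b - a) k" "0 \<le> (1 - 1/q)^(n - k)"
      using q ab by (simp_all add: conc_bound_nonneg)
    then have "of_nat (n choose k) * ?G k = ennreal (real (n choose k) * (((1/q)^k * conc_bound (b - a) k) * (1 - 1/q)^(n - k)))"
      using q0 by (simp add: ennreal_power ennreal_of_nat_eq_real_of_nat ennreal_mult)
    then show "of_nat (n choose k) * ?G k = ennreal (real (n choose k) * (1/q)^k * (1 - 1/q)^(n - k) * conc_bound (b - a) k)"
      by (simp add: mult_ac)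
  qed
  also have "\<dots> = ennreal (binomial_expectation n (1/q) (conc_bound (b - a)))"
    unfolding binomial_expectation_def using q q0 ab
    by (intro sum_ennreal mult_nonneg_nonneg) (simp_all add: conc_bound_nonneg)
  finally show ?thesis .
qed

lemma binomial_expectation_const: "binomial_expectation n p (\<lambda>_. c) = c"
  using binomial_ring[of p "1 - p" n] by (simp add: binomial_expectation_def flip: sum_distrib_right)

lemma binomial_expectation_add:
  "binomial_expectation n p (\<lambda>k. f k + g k) = binomial_expectation n p f + binomial_expectation n p g"
  by (simp add: binomial_expectation_def distrib_left sum.distrib)

lemma binomial_expectation_mono:
  assumes "0 \<le> p" "p \<le> 1" and "\<And>k. k \<le> n \<Longrightarrow> f k \<le> g k"
  shows "binomial_expectation n p f \<le> binomial_expectation n p g"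
  unfolding binomial_expectation_def using assms by (intro sum_mono mult_left_mono) auto

text \<open>Chernoff bound, comparing the indicator of \<open>k < np/4\<close> with \<open>e\<^sup>n\<^sup>p\<^sup>/\<^sup>4\<^sup>-\<^sup>k\<close>.\<close>

lemma binomial_expectation_lower_tail_le:
  assumes p0: "0 \<le> p" and p1: "p \<le> 1"
  shows "binomial_expectation n p (\<lambda>k. if real k < real n * p / 4 then 1 else 0) \<le> exp (- (real n * p) / 4)"
proof -
  define m where "m = real n * p"
  have "binomial_expectation n p (\<lambda>k. if real k < m / 4 then 1 else 0)
      \<le> binomial_expectation n p (\<lambda>k. exp (m/4) * exp (-1)^k)"
  proof (rule binomial_expectation_mono[OF p0 p1])
    fix k
    have "exp (m/4) * exp (-1)^k = exp (m/4 - real k)"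
      by (simp add: exp_of_nat_mult[symmetric] exp_add[symmetric])
    then show "(if real k < m / 4 then 1 else 0) \<le> exp (m/4) * exp (-1)^k" by auto
  qed
  also have "\<dots> = exp (m/4) * (p * exp (-1) + (1 - p))^n"
    by (simp add: binomial_ring[of "p * exp (-1)" "1 - p" n] binomial_expectation_def sum_distrib_left
        power_mult_distrib mult_ac)
  also have "\<dots> \<le> exp (m/4) * exp (- p / 2)^n"
  proof (intro mult_left_mono power_mono)
    have "2 \<le> exp (1::real)" using exp_ge_add_one_self[of "1::real"] by simp
    then have "exp (-1::real) \<le> 1/2" by (simp add: exp_minus field_simps)
    then have "p * exp (-1) + (1 - p) \<le> 1 + (- p / 2)"
      using mult_left_mono[of "exp (-1)" "1/2" p] p0 by linarith
    also have "\<dots> \<le> exp (- p / 2)" by (rule exp_ge_add_one_self)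
    finally show "p * exp (-1) + (1 - p) \<le> exp (- p / 2)" .
  qed (use p0 p1 in simp_all)
  also have "\<dots> = exp (- m / 4)"
    by (simp add: m_def exp_of_nat_mult[symmetric] exp_add[symmetric])
  finally show ?thesis by (simp add: m_def)
qed

lemma binomial_expectation_conc_bound_le:
  assumes n: "n \<ge> 1" and p0: "0 < p" and p1: "p \<le> 1" and h: "h \<ge> 0"
  shows "binomial_expectation n p (conc_bound h) \<le> exp (- (real n * p) / 4) + 4 * h / sqrt (real n * p)"
proof -
  define m where "m = real n * p"
  have m0: "m > 0" using n p0 by (simp add: m_def)
  have "binomial_expectation n p (conc_bound h)
      \<le> binomial_expectation n p (\<lambda>k. (if real k < m/4 then 1 else 0) + 4 * h / sqrt m)"
  proof (rule binomial_expectation_mono)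
    fix k
    show "conc_bound h k \<le> (if real k < m/4 then 1 else 0) + 4 * h / sqrt m"
    proof (cases "real k < m/4")
      case False
      then have "k \<ge> 1" using m0 by (cases k) auto
      then have "conc_bound h k \<le> 2 * h / sqrt (real k + 1)" by (simp add: conc_bound_def)
      also have "\<dots> \<le> 2 * h / sqrt (m/4)"
        using False m0 h by (intro divide_left_mono mult_nonneg_nonneg real_sqrt_le_mono) auto
      also have "\<dots> = 4 * h / sqrt m" by (simp add: real_sqrt_divide)
      finally show ?thesis using False by simp
    next
      case True
      have "0 \<le> 4 * h / sqrt m" using h m0 by simp
      with True conc_bound_le_1[of h k] show ?thesis by simp
    qed
  qed (use p0 p1 in auto)
  also have "\<dots> \<le> exp (- m / 4) + 4 * h / sqrt m"
    using binomial_expectation_lower_tail_le[of p n] p0 p1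
    by (simp add: binomial_expectation_add binomial_expectation_const m_def)
  finally show ?thesis by (simp add: m_def)
qed

section \<open>Increments of the distribution function and the integrals of \<open>\<psi>\<close>\<close>

lemma sumpow_cdf_increment_bounds:
  assumes n: "n \<ge> 1" and q: "q \<ge> 1" and h: "h \<ge> 0"
  shows "0 \<le> sumpow_cdf n q t - sumpow_cdf n q (t - h)"
    and "sumpow_cdf n q t - sumpow_cdf n q (t - h) \<le> exp (- (real n / q) / 4) + 4 * h * sqrt (q / real n)"
proof -
  let ?P = "PiM {..<n} (\<lambda>_. unif01)"
  let ?S = "\<lambda>x. \<Sum>i<n. x i powr q"
  interpret P: prob_space ?P by (intro prob_space_PiM prob_space_unif01)
  have "sumpow_cdf n q t - sumpow_cdf n q (t - h)
      = measure ?P ({x \<in> space ?P. ?S x \<le> t} - {x \<in> space ?P. ?S x \<le> t - h})"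
    unfolding sumpow_cdf_def unif_cube_eq_PiM_unif01
    by (rule P.finite_measure_Diff[symmetric]) (use h in auto)
  also have "{x \<in> space ?P. ?S x \<le> t} - {x \<in> space ?P. ?S x \<le> t - h} = {x \<in> space ?P. ?S x \<in> {t - h<..t}}"
    by auto
  finally have eq: "sumpow_cdf n q t - sumpow_cdf n q (t - h) = measure ?P {x \<in> space ?P. ?S x \<in> {t - h<..t}}" .
  then show "0 \<le> sumpow_cdf n q t - sumpow_cdf n q (t - h)" by simp
  have "emeasure ?P {x \<in> space ?P. ?S x \<in> {t - h<..t}} \<le> ennreal (binomial_expectation n (1/q) (conc_bound h))"
    using emeasure_sum_powr_in_interval_le[OF q, of "t - h" t n] h by simp
  also have "binomial_expectation n (1/q) (conc_bound h) \<le> exp (- (real n / q) / 4) + 4 * h * sqrt (q / real n)"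
    using binomial_expectation_conc_bound_le[OF n _ _ h, of "1/q"] q n
    by (simp add: real_sqrt_divide field_simps)
  finally show "sumpow_cdf n q t - sumpow_cdf n q (t - h) \<le> exp (- (real n / q) / 4) + 4 * h * sqrt (q / real n)"
    unfolding eq measure_def using q h by (intro enn2real_leI) (auto simp: ennreal_leI order_trans)
qed

lemma small_exponent_bounds:
  fixes D q :: real
  assumes D: "D \<ge> 3" and q: "q \<ge> 1" and small: "q \<le> D / (8 * ln D)"
  shows "4 * q * ln D \<le> D - 1" and "q \<le> D"
proof -
  have lnD: "1 \<le> ln D"
    using D exp_le by (subst ln_ge_iff) auto
  have "q * ln D * 8 \<le> D" using small lnD by (simp add: field_simps)
  moreover have "q \<le> q * ln D" using mult_left_mono[OF lnD, of q] q by simp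
  ultimately show "4 * q * ln D \<le> D - 1" and "q \<le> D" using q by linarith+
qed

lemma psi_le_of_small_q:
  assumes d: "real d \<ge> 3" and q: "q \<ge> 1" and small: "q \<le> real d / (8 * ln (real d))" and l: "0 \<le> l"
  shows "0 \<le> psi d q l" and "psi d q l \<le> 1 / real d + 4 * sqrt (q / (real d - 1)) * l powr q"
proof -
  have n: "d - 1 \<ge> 1" and rd: "real (d - 1) = real d - 1" using d by auto
  show "0 \<le> psi d q l"
    unfolding psi_def by (rule sumpow_cdf_increment_bounds(1)[OF n q]) simp
  have "ln (real d) \<le> ((real d - 1) / q) / 4"
    using small_exponent_bounds(1)[OF d q small] q by (simp add: field_simps)
  then have "exp (- (real (d - 1) / q) / 4) \<le> exp (- ln (real d))"
    unfolding rd by simp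
  also have "\<dots> = 1 / real d" using d by (simp add: exp_minus inverse_eq_divide)
  finally show "psi d q l \<le> 1 / real d + 4 * sqrt (q / (real d - 1)) * l powr q"
    using sumpow_cdf_increment_bounds(2)[OF n q, of "l powr q" "tau_half d q powr q"]
    unfolding psi_def rd by (simp add: mult_ac)
qed

text \<open>No integrability of \<open>f\<close> is needed: otherwise \<open>integral S f = 0\<close>, and \<open>0 \<le> I\<close>.\<close>

lemma integral_bounds_of_has_integral_majorant:
  fixes f g :: "'a::euclidean_space \<Rightarrow> real"
  assumes g: "(g has_integral I) S" and f0: "\<And>x. x \<in> S \<Longrightarrow> 0 \<le> f x" and fg: "\<And>x. x \<in> S \<Longrightarrow> f x \<le> g x"
  shows "0 \<le> integral S f" and "integral S f \<le> I"
proof -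
  have "0 \<le> I" using g f0 fg by (intro has_integral_nonneg[OF g]) (auto intro: order_trans)
  show "0 \<le> integral S f"
    using f0 by (cases "f integrable_on S") (auto intro: integral_nonneg simp: not_integrable_integral)
  show "integral S f \<le> I"
    using \<open>0 \<le> I\<close> fg by (cases "f integrable_on S")
      (auto intro: has_integral_le[OF integrable_integral g] simp: not_integrable_integral)
qed

lemma integral_psi_le:
  assumes d: "real d \<ge> 3" and q: "q \<ge> 1" and small: "q \<le> real d / (8 * ln (real d))"
  shows "\<bar>integral {0..1} (psi d q)\<bar> \<le> 7 / sqrt (real d * q)"
proof -
  define c where "c = 4 * sqrt (q / (real d - 1))"
  have "((\<lambda>l. 1 / real d + c * l powr q) has_integral (1 / real d * 1 + c * (1 / (q + 1)))) {0..1}"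
    using has_integral_powr_from_0[of q 1] q
    by (intro has_integral_add has_integral_mult_right) (auto simp: has_integral_const_real[of _ 0 1, simplified])
  moreover have "0 \<le> psi d q l" "psi d q l \<le> 1 / real d + c * l powr q" if "l \<in> {0..1}" for l
    using psi_le_of_small_q[OF d q small, of l] that by (auto simp: c_def)
  ultimately have psi: "0 \<le> integral {0..1} (psi d q)" "integral {0..1} (psi d q) \<le> 1 / real d + c / (q + 1)"
    using integral_bounds_of_has_integral_majorant[of _ _ "{0..1}" "psi d q"] by auto
  have "sqrt (real d * q) \<le> sqrt (real d * real d)"
    using small_exponent_bounds(2)[OF d q small] d by (intro real_sqrt_le_mono mult_left_mono) auto
  then have "1 / real d \<le> 1 / sqrt (real d * q)"
    using d q by (intro divide_left_mono) auto
  have "c / (q + 1) \<le> c / q"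
    using q d by (intro divide_left_mono) (auto simp: c_def)
  also have "\<dots> = 4 * sqrt (q / (real d - 1) / q\<^sup>2)"
    using q by (simp add: c_def real_sqrt_divide real_sqrt_mult)
  also have "q / (real d - 1) / q\<^sup>2 = 1 / ((real d - 1) * q)"
    using q d by (simp add: power2_eq_square field_simps)
  also have "sqrt (1 / ((real d - 1) * q)) \<le> sqrt (2 / (real d * q))"
    using d q by (intro real_sqrt_le_mono) (simp add: field_simps)
  also have "\<dots> \<le> (3/2) / sqrt (real d * q)"
  proof -
    have "sqrt 2 \<le> sqrt ((3/2)\<^sup>2)" by (intro real_sqrt_le_mono) (simp add: power2_eq_square)
    then have "sqrt 2 \<le> 3/2" by simp
    from divide_right_mono[OF this, of "sqrt (real d * q)"] d q show ?thesis
      by (simp add: real_sqrt_divide)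
  qed
  finally show ?thesis
    using psi \<open>1 / real d \<le> 1 / sqrt (real d * q)\<close> by simp
qed

lemma integral_psi_sq_le:
  assumes d: "real d \<ge> 3" and q: "q \<ge> 1" and small: "q \<le> real d / (8 * ln (real d))"
  shows "\<bar>integral {0..1} (\<lambda>l. (psi d q l)\<^sup>2)\<bar> \<le> 34 / real d"
proof -
  define c where "c = 4 * sqrt (q / (real d - 1))"
  have c2: "c\<^sup>2 = 16 * (q / (real d - 1))"
    using q d by (simp add: c_def power_mult_distrib)
  have "((\<lambda>l. 2 * (1 / real d)\<^sup>2 + 2 * c\<^sup>2 * l powr (2 * q)) has_integral
      (2 * (1 / real d)\<^sup>2 * 1 + 2 * c\<^sup>2 * (1 / (2 * q + 1)))) {0..1}"
    using has_integral_powr_from_0[of "2 * q" 1] q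
    by (intro has_integral_add has_integral_mult_right) (auto simp: has_integral_const_real[of _ 0 1, simplified])
  moreover have "0 \<le> (psi d q l)\<^sup>2" "(psi d q l)\<^sup>2 \<le> 2 * (1 / real d)\<^sup>2 + 2 * c\<^sup>2 * l powr (2 * q)"
    if "l \<in> {0..1}" for l
  proof -
    have "(psi d q l)\<^sup>2 \<le> (1 / real d + c * l powr q)\<^sup>2"
      using psi_le_of_small_q[OF d q small, of l] that by (intro power_mono) (auto simp: c_def)
    also have "\<dots> \<le> 2 * (1 / real d)\<^sup>2 + 2 * (c * l powr q)\<^sup>2"
      using sum_squares_bound[of "1 / real d" "c * l powr q"] by (simp add: power2_sum)
    also have "(c * l powr q)\<^sup>2 = c\<^sup>2 * l powr (2 * q)"
      by (simp add: power_mult_distrib power2_eq_square flip: powr_add)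
    finally show "(psi d q l)\<^sup>2 \<le> 2 * (1 / real d)\<^sup>2 + 2 * c\<^sup>2 * l powr (2 * q)"
      by (simp add: mult.assoc)
  qed simp
  ultimately have psi: "integral {0..1} (\<lambda>l. (psi d q l)\<^sup>2) \<le> 2 * (1 / real d)\<^sup>2 + 32 * (q / (real d - 1) / (2 * q + 1))"
    "0 \<le> integral {0..1} (\<lambda>l. (psi d q l)\<^sup>2)"
    using integral_bounds_of_has_integral_majorant[of _ _ "{0..1}" "\<lambda>l. (psi d q l)\<^sup>2"] by (auto simp: c2)
  have "(1 / real d)\<^sup>2 \<le> 1 / real d"
    using d by (simp add: power2_eq_square field_simps)
  moreover have "q / (real d - 1) / (2 * q + 1) \<le> 1 / real d"
  proof -
    have "3 * q \<le> real d * q" using d q by (intro mult_right_mono) auto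
    moreover have "(real d - 1) * (2 * q + 1) = 2 * (real d * q) + real d - 2 * q - 1"
      by (simp add: algebra_simps)
    ultimately have "real d * q \<le> (real d - 1) * (2 * q + 1)"
      using d q by linarith
    then have "real d * q / ((real d - 1) * (2 * q + 1)) \<le> 1"
      using d q by (subst divide_le_eq_1) auto
    have "q / (real d - 1) / (2 * q + 1) = real d * q / ((real d - 1) * (2 * q + 1)) / real d"
      using d by simp
    also have "\<dots> \<le> 1 / real d"
      using \<open>real d * q / ((real d - 1) * (2 * q + 1)) \<le> 1\<close> d by (intro divide_right_mono) auto
    finally show ?thesis .
  qed
  ultimately show ?thesis using psi by simp
qed

lemma psi_integrals_le:
  assumes d: "real d \<ge> 3" and q: "q \<ge> 1" and small: "q \<le> real d / (8 * ln (real d))"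
  shows "norm (integral {0..1} (psi d q)) \<le> 7 * norm (1 / sqrt (real d * q))"
    and "norm (integral {0..1} (\<lambda>l. (psi d q l)\<^sup>2)) \<le> 34 * norm (1 / real d)"
  using integral_psi_le[OF assms] integral_psi_sq_le[OF assms] d q by simp_all

theorem claim5p1:
  fixes q :: "nat \<Rightarrow> real"
  assumes "\<And>d. q d \<ge> 1"
    and "q \<in> o(\<lambda>d. real d / ln (real d))"
  shows "(\<lambda>d. integral {0..1} (psi d (q d))) \<in> O(\<lambda>d. 1 / sqrt (real d * q d)) \<and>
         (\<lambda>d. integral {0..1} (\<lambda>l. (psi d (q d) l)\<^sup>2)) \<in> O(\<lambda>d. 1 / real d)"
proof -
  have "\<forall>\<^sub>F d in at_top. norm (q d) \<le> 1/8 * norm (real d / ln (real d))"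
    using landau_o.smallD[OF assms(2), of "1/8"] by simp
  then have "\<forall>\<^sub>F d in at_top. real d \<ge> 3 \<and> q d \<le> real d / (8 * ln (real d))"
    using eventually_ge_at_top[of "3::nat"]
  proof eventually_elim
    case (elim d)
    then have "ln (real d) > 0" by simp
    with elim assms(1)[of d] show ?case by (simp add: field_simps)
  qed
  then have "\<forall>\<^sub>F d in at_top.
      norm (integral {0..1} (psi d (q d))) \<le> 7 * norm (1 / sqrt (real d * q d)) \<and>
      norm (integral {0..1} (\<lambda>l. (psi d (q d) l)\<^sup>2)) \<le> 34 * norm (1 / real d)"
    by eventually_elim (use psi_integrals_le assms(1) in blast)
  then show ?thesis
    by (auto intro!: bigoI elim: eventually_mono)
qed

end
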